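(* Let $m\ge 1$ and for $i\in\{1,\dots,m\}$ let $f_i:\mathbb{R}^n\to\mathbb{R}\cup\{\infty\}$ be proper, lower semicontinuous, prox-bounded functions with respective thresholds of prox-boundedness $\bar r_i$. Let $r>\max_i\{\bar r_i\}$. Let $\delta:\Lambda\to\mathbb{R}$ be a continuous function with $\delta(e_i)=0$ for each canonical unit vector $e_i$ and $\delta(\lambda)>0$ for all other $\lambda\in\Lambda$, and define $$PA_r(x,\lambda):=-e_{r+\delta(\lambda)}\Big(-\sum_{i=1}^m\lambda_i e_rf_i\Big)(x).$$ Then for every $\lambda\in\Lambda$, $PA_r(\cdot,\lambda)$ is a proper function of $x$. Furthermore, if $\lambda\in\Lambda$ satisfies $\lambda_i\neq 1$ for all $i$, then $PA_r(\cdot,\lambda)$ is a lower-$\mathcal{C}^2$ function of $x$. Finally, if for some $i$ the function $f_i+\frac{r}{2}q$ is convex, then $PA_r(\cdot,e_i)=f_i$.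
   Context: $q(x)=|x|^2$. $\Lambda=\{\lambda\in\mathbb{R}^m:\lambda_i\ge 0\ \forall i,\ \sum_i\lambda_i=1\}$, and $e_i$ is the canonical unit vector with $i$-th component $1$. The Moreau envelope of $f$ with prox-parameter $r$ is $e_rf(x)=\inf_y\{f(y)+\frac r2|y-x|^2\}$. A proper function $f$ is prox-bounded if there exist $r>0$ and $\bar x$ with $e_rf(\bar x)>-\infty$; the infimum of all such $r$ is the threshold of prox-boundedness. A function is lower-$\mathcal{C}^2$ (on $\mathbb{R}^n$) if it is finite-valued and at every point $x$ the function plus some quadratic term is convex on an open convex neighborhood of $x$. *)

theory Defs
  imports "HOL-Analysis.Analysis" "HOL-Library.Extended_Real"
begin

text \<open>Extended-real valued functions on a Euclidean space model f : R^n -> R \<union> {\<infinity>}.\<close>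

definition q :: "'a::euclidean_space \<Rightarrow> real" where
  "q x = (norm x)\<^sup>2"

definition proper_fn :: "('a \<Rightarrow> ereal) \<Rightarrow> bool" where
  "proper_fn f \<longleftrightarrow> (\<forall>x. f x \<noteq> -\<infinity>) \<and> (\<exists>x. f x < \<infinity>)"

definition lsc_fn :: "('a::topological_space \<Rightarrow> ereal) \<Rightarrow> bool" where
  "lsc_fn f \<longleftrightarrow> (\<forall>x c. c < f x \<longrightarrow> eventually (\<lambda>y. c < f y) (at x))"

definition moreau_env :: "real \<Rightarrow> ('a::euclidean_space \<Rightarrow> ereal) \<Rightarrow> 'a \<Rightarrow> ereal" where
  "moreau_env r f x = (INF y. f y + ereal (r / 2 * (norm (y - x))\<^sup>2))"

definition prox_bounded :: "('a::euclidean_space \<Rightarrow> ereal) \<Rightarrow> bool" where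
  "prox_bounded f \<longleftrightarrow> (\<exists>r>0. \<exists>x. moreau_env r f x > -\<infinity>)"

definition prox_threshold :: "('a::euclidean_space \<Rightarrow> ereal) \<Rightarrow> real" where
  "prox_threshold f = Inf {r. r > 0 \<and> (\<exists>x. moreau_env r f x > -\<infinity>)}"

definition ext_convex :: "('a::real_vector \<Rightarrow> ereal) \<Rightarrow> bool" where
  "ext_convex f \<longleftrightarrow> (\<forall>x y. \<forall>t\<in>{0..1}.
     f ((1 - t) *\<^sub>R x + t *\<^sub>R y) \<le> ereal (1 - t) * f x + ereal t * f y)"

definition lower_C2 :: "('a::euclidean_space \<Rightarrow> ereal) \<Rightarrow> bool" where
  "lower_C2 f \<longleftrightarrow> (\<forall>x. \<bar>f x\<bar> \<noteq> \<infinity>) \<and>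
     (\<forall>x. \<exists>\<rho>::real. \<exists>U. open U \<and> convex U \<and> x \<in> U \<and>
        convex_on U (\<lambda>y. real_of_ereal (f y) + \<rho> * q y))"

text \<open>The unit simplex in R^m (m = CARD('m)).\<close>
definition Lambda_simplex :: "(real ^ 'm::finite) set" where
  "Lambda_simplex = {lam. (\<forall>i. lam $ i \<ge> 0) \<and> (\<Sum>i\<in>UNIV. lam $ i) = 1}"

definition PA :: "real \<Rightarrow> ((real ^ 'm::finite) \<Rightarrow> real) \<Rightarrow> ('m \<Rightarrow> 'a::euclidean_space \<Rightarrow> ereal)
                  \<Rightarrow> 'a \<Rightarrow> real ^ 'm \<Rightarrow> ereal" where
  "PA r \<delta> f x lam = - moreau_env (r + \<delta> lam)
      (\<lambda>z. - (\<Sum>i\<in>UNIV. ereal (lam $ i) * moreau_env r (f i) z)) x"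

end

theory Submission
  imports Defs
begin

(*
  Since r exceeds every threshold of prox-boundedness, each f_i has a quadratic minorant of
  curvature a < r, so every envelope e_r f_i is real-valued and, with s = r + delta(lam),
    PA_r(x, lam) = sup_y (sum_i lam_i e_r f_i(y) - s/2 |y - x|^2).
  Taking y = x bounds this from below. If delta(lam) > 0 then s > r, so the bounds
  e_r f_i(y) <= f_i(z_i) + r/2 |y - z_i|^2 make the supremum finite, and adding s/2 q(x) turns it
  into a supremum of affine functions of x: PA_r(., lam) is lower-C^2.
  At a vertex e_i the supremum is the proximal hull -e_r(-e_r f_i), which lies below f_i. If
  g = f_i + r/2 q is convex, then g is proper, lsc and has an affine minorant, so separating points
  from its closed convex epigraph shows that g is the supremum of its affine minorants. Each of
  them, <w, .> + b, gives e_r f_i(w/r) - r/2 |w/r - x|^2 >= <w, x> + b - r/2 q(x), so the proximal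
  hull equals f_i.
*)

section \<open>Moreau envelopes of prox-bounded functions\<close>

lemma norm_diff_power2:
  fixes a b :: "'a::real_inner"
  shows "(norm (a - b))\<^sup>2 = (norm a)\<^sup>2 - 2 * inner a b + (norm b)\<^sup>2"
  by (simp add: power2_norm_eq_inner inner_diff_left inner_diff_right inner_commute)

lemma norm_diff_power2_le_weighted:
  fixes x y z :: "'a::real_normed_vector"
  assumes "0 < a" "a < b"
  shows "a/2 * (norm (y - z))\<^sup>2 \<le> b/2 * (norm (y - x))\<^sup>2 + a*b / (2*(b - a)) * (norm (x - z))\<^sup>2"
proof -
  define u v where "u = norm (y - x)" and "v = norm (x - z)"
  have "norm (y - z) \<le> u + v"
    unfolding u_def v_def by (rule norm_diff_triangle_le) auto
  then have "a/2 * (norm (y - z))\<^sup>2 \<le> a/2 * (u + v)\<^sup>2"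
    using assms by (intro mult_left_mono power_mono) auto
  also have "\<dots> \<le> b/2 * u\<^sup>2 + a*b / (2*(b - a)) * v\<^sup>2"
  proof -
    have "a/2 * (u + v)\<^sup>2 + ((b - a) * u - a * v)\<^sup>2 / (2*(b - a))
          = b/2 * u\<^sup>2 + a*b / (2*(b - a)) * v\<^sup>2"
      using assms by (simp add: field_simps power2_eq_square)
    moreover have "0 \<le> ((b - a) * u - a * v)\<^sup>2 / (2*(b - a))"
      using assms by simp
    ultimately show ?thesis by linarith
  qed
  finally show ?thesis unfolding u_def v_def .
qed

lemma moreau_env_le: "moreau_env r f x \<le> f z + ereal (r/2 * (norm (z - x))\<^sup>2)"
  unfolding moreau_env_def by (rule INF_lower) simp

lemma moreau_env_less_PInf:
  assumes "proper_fn f"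
  shows "moreau_env r f x < \<infinity>"
proof -
  obtain z where "f z < \<infinity>"
    using assms unfolding proper_fn_def by blast
  then have "f z + ereal (r/2 * (norm (z - x))\<^sup>2) < \<infinity>"
    by simp
  then show ?thesis
    using moreau_env_le by (rule le_less_trans[rotated])
qed

lemma quadratic_minorant_of_moreau_env:
  assumes "moreau_env a f x0 = ereal c"
  shows "ereal (c - a/2 * (norm (y - x0))\<^sup>2) \<le> f y"
  using moreau_env_le[of a f x0 y] assms by (cases "f y") auto

lemma moreau_env_ge_of_quadratic_minorant:
  assumes minorant: "\<And>y. ereal (c - a/2 * (norm (y - x0))\<^sup>2) \<le> f y" and "0 < a" "a < r"
  shows "ereal (c - a*r / (2*(r - a)) * (norm (x - x0))\<^sup>2) \<le> moreau_env r f x"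
  unfolding moreau_env_def
proof (rule INF_greatest)
  fix y
  have "c - a*r / (2*(r - a)) * (norm (x - x0))\<^sup>2
        \<le> (c - a/2 * (norm (y - x0))\<^sup>2) + r/2 * (norm (y - x))\<^sup>2"
    using norm_diff_power2_le_weighted[OF \<open>0 < a\<close> \<open>a < r\<close>, of y x0 x] by simp
  then have "ereal (c - a*r / (2*(r - a)) * (norm (x - x0))\<^sup>2)
        \<le> ereal (c - a/2 * (norm (y - x0))\<^sup>2) + ereal (r/2 * (norm (y - x))\<^sup>2)"
    by simp
  also have "\<dots> \<le> f y + ereal (r/2 * (norm (y - x))\<^sup>2)"
    using minorant by (rule add_right_mono)
  finally show "ereal (c - a*r / (2*(r - a)) * (norm (x - x0))\<^sup>2)
      \<le> f y + ereal (r/2 * (norm (y - x))\<^sup>2)" .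
qed

lemma prox_threshold_nonneg:
  assumes "prox_bounded f"
  shows "0 \<le> prox_threshold f"
  unfolding prox_threshold_def
  using assms unfolding prox_bounded_def by (intro cInf_greatest) auto

lemma prox_bounded_quadratic_minorant:
  assumes "proper_fn f" "prox_bounded f" "prox_threshold f < r"
  obtains a c x0 where "0 < a" "a < r" "\<And>y. ereal (c - a/2 * (norm (y - x0))\<^sup>2) \<le> f y"
proof -
  define S where "S = {r. r > 0 \<and> (\<exists>x. moreau_env r f x > -\<infinity>)}"
  have "S \<noteq> {}"
    using assms(2) unfolding prox_bounded_def S_def by auto
  moreover have "Inf S < r"
    using assms(3) unfolding prox_threshold_def S_def .
  ultimately obtain a where "a \<in> S" "a < r"
    using cInf_lessD by blast
  then obtain x0 where "0 < a" "moreau_env a f x0 > -\<infinity>"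
    unfolding S_def by blast
  moreover have "moreau_env a f x0 < \<infinity>"
    using assms(1) by (rule moreau_env_less_PInf)
  ultimately obtain c where "moreau_env a f x0 = ereal c"
    by (cases "moreau_env a f x0") auto
  with \<open>0 < a\<close> \<open>a < r\<close> show thesis
    by (intro that quadratic_minorant_of_moreau_env)
qed

lemma moreau_env_finite:
  assumes "proper_fn f" "prox_bounded f" "prox_threshold f < r"
  shows "\<bar>moreau_env r f x\<bar> \<noteq> \<infinity>"
proof -
  obtain a c x0 where "0 < a" "a < r" "\<And>y. ereal (c - a/2 * (norm (y - x0))\<^sup>2) \<le> f y"
    using prox_bounded_quadratic_minorant[OF assms] by blast
  then have "ereal (c - a*r / (2*(r - a)) * (norm (x - x0))\<^sup>2) \<le> moreau_env r f x"
    by (intro moreau_env_ge_of_quadratic_minorant)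
  then show ?thesis
    using moreau_env_less_PInf[OF assms(1), of r x] by auto
qed

lemma uminus_moreau_env_uminus:
  "- moreau_env s (\<lambda>y. - g y) x = (SUP y. g y - ereal (s/2 * (norm (y - x))\<^sup>2))"
proof -
  have "- moreau_env s (\<lambda>y. - g y) x = (SUP y. - (- g y + ereal (s/2 * (norm (y - x))\<^sup>2)))"
    unfolding moreau_env_def by (simp add: ereal_SUP_uminus_eq)
  also have "\<dots> = (SUP y. g y - ereal (s/2 * (norm (y - x))\<^sup>2))"
  proof (rule SUP_cong)
    show "- (- g y + ereal t) = g y - ereal t" for y t
      by (cases "g y") auto
  qed simp
  finally show ?thesis .
qed

section \<open>Suprema of concave quadratic perturbations\<close>

lemma convex_on_SUP_affine:
  fixes P :: "'a::real_inner \<Rightarrow> real"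
  assumes "\<And>x. ereal (P x) = (SUP y\<in>Y. ereal (inner (a y) x + b y))"
  shows "convex_on UNIV P"
proof (rule convex_onI)
  fix t :: real and x z :: 'a
  assume "0 < t" "t < 1"
  have "ereal (P ((1 - t) *\<^sub>R x + t *\<^sub>R z)) \<le> ereal ((1 - t) * P x + t * P z)"
    unfolding assms
  proof (rule SUP_least)
    fix y assume "y \<in> Y"
    then have "inner (a y) x + b y \<le> P x" "inner (a y) z + b y \<le> P z"
      using SUP_upper[of y Y "\<lambda>y. ereal (inner (a y) _ + b y)"] by (simp_all flip: assms)
    then have "(1 - t) * (inner (a y) x + b y) + t * (inner (a y) z + b y) \<le> (1 - t) * P x + t * P z"
      using \<open>0 < t\<close> \<open>t < 1\<close> by (intro add_mono mult_left_mono) auto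
    then show "ereal (inner (a y) ((1 - t) *\<^sub>R x + t *\<^sub>R z) + b y) \<le> ereal ((1 - t) * P x + t * P z)"
      by (simp add: inner_add_right algebra_simps)
  qed
  then show "P ((1 - t) *\<^sub>R x + t *\<^sub>R z) \<le> (1 - t) * P x + t * P z"
    by simp
qed simp

lemma convex_on_SUP_minus_quadratic:
  fixes h :: "'a::euclidean_space \<Rightarrow> real"
  assumes "\<And>x. (SUP y. ereal (h y - s/2 * (norm (y - x))\<^sup>2)) = ereal (P x)"
  shows "convex_on UNIV (\<lambda>x. P x + s/2 * q x)"
proof (rule convex_on_SUP_affine)
  fix x
  have affine: "ereal (h y - s/2 * (norm (y - x))\<^sup>2) + ereal (s/2 * q x)
      = ereal (inner (s *\<^sub>R y) x + (h y - s/2 * q y))" for y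
    unfolding q_def norm_diff_power2 by (simp add: algebra_simps)
  have "ereal (P x + s/2 * q x) = (SUP y. ereal (h y - s/2 * (norm (y - x))\<^sup>2)) + ereal (s/2 * q x)"
    unfolding assms by simp
  also have "\<dots> = (SUP y. ereal (h y - s/2 * (norm (y - x))\<^sup>2) + ereal (s/2 * q x))"
    by (rule SUP_ereal_add_left[symmetric]) simp_all
  also have "\<dots> = (SUP y. ereal (inner (s *\<^sub>R y) x + (h y - s/2 * q y)))"
    unfolding affine ..
  finally show "ereal (P x + s/2 * q x) = (SUP y\<in>UNIV. ereal (inner (s *\<^sub>R y) x + (h y - s/2 * q y)))" .
qed

lemma SUP_convex_combination_minus_quadratic_le:
  fixes e :: "'m::finite \<Rightarrow> 'a::euclidean_space \<Rightarrow> real"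
  assumes "0 < r" "r < s" and lam: "lam \<in> Lambda_simplex"
    and e_le: "\<And>i y. e i y \<le> F i + r/2 * (norm (y - z i))\<^sup>2"
  shows "(SUP y. ereal ((\<Sum>i\<in>UNIV. lam $ i * e i y) - s/2 * (norm (y - x))\<^sup>2))
       \<le> ereal (\<Sum>i\<in>UNIV. lam $ i * (F i + r * s / (2 * (s - r)) * (norm (x - z i))\<^sup>2))"
proof (rule SUP_least)
  fix y
  have lam_nonneg: "0 \<le> lam $ i" for i
    using lam unfolding Lambda_simplex_def by auto
  have lam_sum: "(\<Sum>i\<in>UNIV. lam $ i) = 1"
    using lam unfolding Lambda_simplex_def by auto
  have "e i y - s/2 * (norm (y - x))\<^sup>2 \<le> F i + r * s / (2 * (s - r)) * (norm (x - z i))\<^sup>2" for i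
    using e_le[of i y] norm_diff_power2_le_weighted[OF \<open>0 < r\<close> \<open>r < s\<close>, of y "z i" x] by linarith
  then have "(\<Sum>i\<in>UNIV. lam $ i * (e i y - s/2 * (norm (y - x))\<^sup>2))
      \<le> (\<Sum>i\<in>UNIV. lam $ i * (F i + r * s / (2 * (s - r)) * (norm (x - z i))\<^sup>2))"
    by (intro sum_mono mult_left_mono lam_nonneg)
  moreover have "(\<Sum>i\<in>UNIV. lam $ i * (e i y - C))
      = (\<Sum>i\<in>UNIV. lam $ i * e i y) - (\<Sum>i\<in>UNIV. lam $ i) * C" for C
    by (simp add: right_diff_distrib sum_subtractf sum_distrib_right)
  ultimately show "ereal ((\<Sum>i\<in>UNIV. lam $ i * e i y) - s/2 * (norm (y - x))\<^sup>2)
      \<le> ereal (\<Sum>i\<in>UNIV. lam $ i * (F i + r * s / (2 * (s - r)) * (norm (x - z i))\<^sup>2))"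
    by (simp add: lam_sum)
qed

section \<open>Affine minorants of lower semicontinuous convex functions\<close>

lemma lsc_fn_eventually_nhds:
  assumes "lsc_fn g" "c < g x"
  shows "\<forall>\<^sub>F y in nhds x. c < g y"
  using assms unfolding lsc_fn_def eventually_at_filter
  by (auto elim!: eventually_mono)

lemma lsc_fn_add_continuous:
  assumes "lsc_fn f" and "\<And>x. isCont k x"
  shows "lsc_fn (\<lambda>x. f x + ereal (k x))"
  unfolding lsc_fn_def
proof (intro allI impI)
  fix x c
  assume "c < f x + ereal (k x)"
  then have "c - ereal (k x) < f x"
    by (cases c; cases "f x") auto
  then obtain d where "c - ereal (k x) < d" "d < f x"
    using ereal_dense2 by blast
  have "\<forall>\<^sub>F y in at x. d < f y"
    using assms(1) \<open>d < f x\<close> unfolding lsc_fn_def by blast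
  moreover have "\<forall>\<^sub>F y in at x. c - d < ereal (k y)"
  proof -
    have "c - d < ereal (k x)"
      using \<open>c - ereal (k x) < d\<close> by (cases c; cases d) auto
    moreover have "((\<lambda>y. ereal (k y)) \<longlongrightarrow> ereal (k x)) (at x)"
      using assms(2)[of x] unfolding isCont_def by (rule tendsto_ereal)
    ultimately show ?thesis
      by (rule order_tendstoD(1)[rotated])
  qed
  ultimately show "\<forall>\<^sub>F y in at x. c < f y + ereal (k y)"
  proof eventually_elim
    case (elim y)
    then show ?case
      by (cases c; cases d; cases "f y") auto
  qed
qed

definition ereal_epigraph :: "('a \<Rightarrow> ereal) \<Rightarrow> ('a \<times> real) set" where
  "ereal_epigraph g = {p. g (fst p) \<le> ereal (snd p)}"

lemma closed_ereal_epigraph: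
  assumes "lsc_fn g"
  shows "closed (ereal_epigraph g)"
  unfolding closed_def
proof (rule open_subopen[THEN iffD2], intro ballI)
  fix p :: "'a \<times> real"
  assume "p \<in> - ereal_epigraph g"
  then have "ereal (snd p) < g (fst p)"
    unfolding ereal_epigraph_def by auto
  then obtain d where "ereal (snd p) < ereal d" "ereal d < g (fst p)"
    using ereal_dense2 by blast
  have "\<forall>\<^sub>F y in nhds (fst p). ereal d < g y"
    using assms \<open>ereal d < g (fst p)\<close> by (rule lsc_fn_eventually_nhds)
  moreover have "\<forall>\<^sub>F t in nhds (snd p). t \<in> {..<d}"
    using \<open>ereal (snd p) < ereal d\<close> by (intro eventually_nhds_in_open) auto
  ultimately have "\<forall>\<^sub>F p' in nhds (fst p) \<times>\<^sub>F nhds (snd p). ereal d < g (fst p') \<and> snd p' \<in> {..<d}"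
    by (rule eventually_prodI)
  then have "\<forall>\<^sub>F p' in nhds p. ereal (snd p') < g (fst p')"
    unfolding nhds_prod[symmetric] prod.collapse
    by (rule eventually_mono) (auto intro: less_trans[of "ereal _" "ereal d"])
  then have "\<forall>\<^sub>F p' in nhds p. p' \<in> - ereal_epigraph g"
    unfolding ereal_epigraph_def by (simp add: not_le)
  then show "\<exists>T. open T \<and> p \<in> T \<and> T \<subseteq> - ereal_epigraph g"
    unfolding eventually_nhds by auto
qed

lemma convex_ereal_epigraph:
  assumes "ext_convex g"
  shows "convex (ereal_epigraph g)"
  unfolding convex_alt
proof (intro ballI allI impI)
  fix p p' :: "'a \<times> real" and t :: real
  assume "p \<in> ereal_epigraph g" "p' \<in> ereal_epigraph g" and t: "0 \<le> t \<and> t \<le> 1"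
  then have "g (fst p) \<le> ereal (snd p)" "g (fst p') \<le> ereal (snd p')"
    unfolding ereal_epigraph_def by auto
  have "g (fst ((1 - t) *\<^sub>R p + t *\<^sub>R p')) \<le> ereal (1 - t) * g (fst p) + ereal t * g (fst p')"
    using assms t unfolding ext_convex_def by simp
  also have "\<dots> \<le> ereal (1 - t) * ereal (snd p) + ereal t * ereal (snd p')"
    using t \<open>g (fst p) \<le> _\<close> \<open>g (fst p') \<le> _\<close> by (intro add_mono ereal_mult_left_mono) auto
  finally show "(1 - t) *\<^sub>R p + t *\<^sub>R p' \<in> ereal_epigraph g"
    unfolding ereal_epigraph_def by simp
qed

lemma ereal_epigraph_separation:
  fixes g :: "'a::euclidean_space \<Rightarrow> ereal"
  assumes "ext_convex g" "lsc_fn g" "proper_fn g" "ereal \<alpha> < g x"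
  obtains w \<beta> c where "0 \<le> \<beta>" "inner w x + \<beta> * \<alpha> < c"
    "\<And>z t. g z \<le> ereal t \<Longrightarrow> c < inner w z + \<beta> * t"
proof -
  have "(x, \<alpha>) \<notin> ereal_epigraph g"
    using \<open>ereal \<alpha> < g x\<close> by (simp add: ereal_epigraph_def not_le)
  then obtain a c where "inner a (x, \<alpha>) < c" "\<forall>p\<in>ereal_epigraph g. c < inner a p"
    using separating_hyperplane_closed_point convex_ereal_epigraph closed_ereal_epigraph assms(1,2)
    by metis
  moreover obtain w \<beta> where "a = (w, \<beta>)"
    by fastforce
  ultimately have sep_x: "inner w x + \<beta> * \<alpha> < c"
    and sep: "\<And>z t. g z \<le> ereal t \<Longrightarrow> c < inner w z + \<beta> * t"
    by (auto simp: ereal_epigraph_def inner_prod_def)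
  obtain z0 where "g z0 < \<infinity>" "g z0 \<noteq> -\<infinity>"
    using \<open>proper_fn g\<close> unfolding proper_fn_def by blast
  then obtain T where "g z0 = ereal T"
    by (cases "g z0") auto
  have "0 \<le> \<beta>"
  proof (rule ccontr)
    assume "\<not> 0 \<le> \<beta>"
    define t where "t = max T ((c - inner w z0) / \<beta>)"
    have "c < inner w z0 + \<beta> * t"
      by (rule sep) (simp add: \<open>g z0 = ereal T\<close> t_def)
    moreover have "(c - inner w z0) / \<beta> \<le> t"
      unfolding t_def by simp
    then have "t * \<beta> \<le> c - inner w z0"
      using \<open>\<not> 0 \<le> \<beta>\<close> by (simp add: neg_divide_le_eq)
    ultimately show False
      by (simp add: algebra_simps)
  qed
  with sep_x sep show thesis
    using that by blast
qed

lemma affine_minorant_of_separation: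
  fixes g :: "'a::real_inner \<Rightarrow> ereal"
  assumes "0 < \<beta>" "inner w x + \<beta> * \<alpha> < c"
    and sep: "\<And>z t. g z \<le> ereal t \<Longrightarrow> c < inner w z + \<beta> * t"
    and not_MInf: "\<And>z. g z \<noteq> -\<infinity>"
  obtains w' b' where "\<And>z. ereal (inner w' z + b') \<le> g z" "\<alpha> \<le> inner w' x + b'"
proof
  have affine_eq: "inner (- (1 / \<beta>) *\<^sub>R w) z + c / \<beta> = (c - inner w z) / \<beta>" for z
    using \<open>0 < \<beta>\<close> by (simp add: field_simps)
  fix z
  show "ereal (inner (- (1 / \<beta>) *\<^sub>R w) z + c / \<beta>) \<le> g z"
  proof (cases "g z")
    case (real t)
    then have "(c - inner w z) / \<beta> < t"
      using sep[of z t] \<open>0 < \<beta>\<close> by (simp add: divide_less_eq algebra_simps)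
    then show ?thesis
      using real affine_eq by simp
  qed (use not_MInf in auto)
  have "\<alpha> < (c - inner w x) / \<beta>"
    using assms(1,2) by (simp add: less_divide_eq algebra_simps)
  then show "\<alpha> \<le> inner (- (1 / \<beta>) *\<^sub>R w) x + c / \<beta>"
    unfolding affine_eq by simp
qed

(* The case of a vertical separating hyperplane: x then lies outside the domain of g, and adding
   a large multiple of the separating functional to the given minorant lifts it above alpha at x. *)
lemma affine_minorant_tilt:
  fixes g :: "'a::real_inner \<Rightarrow> ereal"
  assumes minorant: "\<And>z. ereal (inner w0 z + b0) \<le> g z"
    and dom: "\<And>z. g z < \<infinity> \<Longrightarrow> c < inner w z" and "inner w x < c"
  obtains w' b' where "\<And>z. ereal (inner w' z + b') \<le> g z" "\<alpha> \<le> inner w' x + b'"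
proof -
  define k where "k = max 0 ((\<alpha> - inner w0 x - b0) / (c - inner w x))"
  have "0 \<le> k"
    unfolding k_def by simp
  have "(\<alpha> - inner w0 x - b0) / (c - inner w x) \<le> k"
    unfolding k_def by simp
  then have "\<alpha> - inner w0 x - b0 \<le> k * (c - inner w x)"
    using \<open>inner w x < c\<close> by (simp add: pos_divide_le_eq)
  show thesis
  proof (rule that)
    fix z
    show "ereal (inner (w0 - k *\<^sub>R w) z + (b0 + k * c)) \<le> g z"
    proof (cases "g z < \<infinity>")
      case True
      then have "k * (c - inner w z) \<le> 0"
        using dom[OF True] \<open>0 \<le> k\<close> by (intro mult_nonneg_nonpos) auto
      then have "ereal (inner (w0 - k *\<^sub>R w) z + (b0 + k * c)) \<le> ereal (inner w0 z + b0)"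
        by (simp add: inner_diff_left algebra_simps)
      also have "\<dots> \<le> g z"
        by (rule minorant)
      finally show ?thesis .
    qed (simp add: top.not_eq_extremum)
  next
    show "\<alpha> \<le> inner (w0 - k *\<^sub>R w) x + (b0 + k * c)"
      using \<open>\<alpha> - inner w0 x - b0 \<le> _\<close> by (simp add: inner_diff_left algebra_simps)
  qed
qed

lemma convex_lsc_affine_minorant_above:
  fixes g :: "'a::euclidean_space \<Rightarrow> ereal"
  assumes "ext_convex g" "lsc_fn g" "proper_fn g"
    and minorant: "\<And>z. ereal (inner w0 z + b0) \<le> g z"
    and "ereal \<alpha> < g x"
  obtains w b where "\<And>z. ereal (inner w z + b) \<le> g z" "\<alpha> \<le> inner w x + b"
proof -
  obtain \<beta> w c where "0 \<le> \<beta>" and sep_x: "inner w x + \<beta> * \<alpha> < c"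
    and sep: "\<And>z t. g z \<le> ereal t \<Longrightarrow> c < inner w z + \<beta> * t"
    by (rule ereal_epigraph_separation[OF assms(1-3,5)]) (rule that)
  have not_MInf: "g z \<noteq> -\<infinity>" for z
    using \<open>proper_fn g\<close> unfolding proper_fn_def by blast
  show thesis
  proof (cases "\<beta> = 0")
    case True
    have dom: "c < inner w z" if "g z < \<infinity>" for z
      using sep[of z "real_of_ereal (g z)"] \<open>g z < \<infinity>\<close> not_MInf[of z] True by (cases "g z") auto
    have "inner w x < c"
      using sep_x True by simp
    with minorant dom show thesis
      using that by (rule affine_minorant_tilt)
  next
    case False
    with \<open>0 \<le> \<beta>\<close> have "0 < \<beta>"
      by simp
    then show thesis
      using sep_x sep not_MInf that by (rule affine_minorant_of_separation)
  qed
qed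

section \<open>The proximal hull\<close>

definition proximal_hull :: "real \<Rightarrow> ('a::euclidean_space \<Rightarrow> ereal) \<Rightarrow> 'a \<Rightarrow> ereal" where
  "proximal_hull r f x = - moreau_env r (\<lambda>y. - moreau_env r f y) x"

lemma proximal_hull_eq_SUP:
  "proximal_hull r f x = (SUP y. moreau_env r f y - ereal (r/2 * (norm (y - x))\<^sup>2))"
  unfolding proximal_hull_def by (rule uminus_moreau_env_uminus)

lemma proximal_hull_le: "proximal_hull r f x \<le> f x"
  unfolding proximal_hull_eq_SUP
proof (rule SUP_least)
  fix y
  have "moreau_env r f y \<le> f x + ereal (r/2 * (norm (y - x))\<^sup>2)"
    using moreau_env_le[of r f y x] by (simp add: norm_minus_commute)
  then show "moreau_env r f y - ereal (r/2 * (norm (y - x))\<^sup>2) \<le> f x"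
    by (simp add: ereal_minus_le_iff)
qed

lemma affine_minorant_le_proximal_hull:
  assumes "0 < r" and minorant: "\<And>v. ereal (inner w v + b) \<le> f v + ereal (r/2 * q v)"
  shows "ereal (inner w x + b - r/2 * q x) \<le> proximal_hull r f x"
proof -
  define y where "y = w /\<^sub>R r"
  have w_eq: "w = r *\<^sub>R y"
    unfolding y_def using \<open>0 < r\<close> by simp
  have "ereal (b + r/2 * (norm y)\<^sup>2) \<le> moreau_env r f y"
    unfolding moreau_env_def
  proof (rule INF_greatest)
    fix v
    have "ereal (b + r/2 * (norm y)\<^sup>2)
        = ereal (inner w v + b) - ereal (r/2 * q v) + ereal (r/2 * (norm (v - y))\<^sup>2)"
      unfolding w_eq q_def norm_diff_power2 by (simp add: algebra_simps inner_commute)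
    also have "\<dots> \<le> f v + ereal (r/2 * (norm (v - y))\<^sup>2)"
      using minorant[of v] by (cases "f v") auto
    finally show "ereal (b + r/2 * (norm y)\<^sup>2) \<le> f v + ereal (r/2 * (norm (v - y))\<^sup>2)" .
  qed
  moreover have "inner w x + b - r/2 * q x = b + r/2 * (norm y)\<^sup>2 - r/2 * (norm (y - x))\<^sup>2"
    unfolding w_eq q_def norm_diff_power2 by (simp add: algebra_simps)
  ultimately have "ereal (inner w x + b - r/2 * q x) \<le> moreau_env r f y - ereal (r/2 * (norm (y - x))\<^sup>2)"
    by (cases "moreau_env r f y") auto
  also have "\<dots> \<le> proximal_hull r f x"
    unfolding proximal_hull_eq_SUP by (rule SUP_upper) simp
  finally show ?thesis .
qed

lemma affine_minorant_of_quadratic_minorant: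
  assumes "\<And>y. ereal (c - a/2 * (norm (y - x0))\<^sup>2) \<le> f y" "a \<le> r"
  shows "ereal (inner (a *\<^sub>R x0) y + (c - a/2 * (norm x0)\<^sup>2)) \<le> f y + ereal (r/2 * q y)"
proof -
  have "a * (norm y)\<^sup>2 \<le> r * (norm y)\<^sup>2"
    using \<open>a \<le> r\<close> by (intro mult_right_mono) auto
  then have "inner (a *\<^sub>R x0) y + (c - a/2 * (norm x0)\<^sup>2) \<le> (c - a/2 * (norm (y - x0))\<^sup>2) + r/2 * q y"
    unfolding q_def norm_diff_power2 by (simp add: algebra_simps inner_commute)
  then have "ereal (inner (a *\<^sub>R x0) y + (c - a/2 * (norm x0)\<^sup>2))
      \<le> ereal (c - a/2 * (norm (y - x0))\<^sup>2) + ereal (r/2 * q y)"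
    by simp
  also have "\<dots> \<le> f y + ereal (r/2 * q y)"
    using assms(1) by (rule add_right_mono)
  finally show ?thesis .
qed

lemma proximal_hull_eq_self:
  assumes proper: "proper_fn f" and lsc: "lsc_fn f"
    and "prox_bounded f" "prox_threshold f < r"
    and convex: "ext_convex (\<lambda>x. f x + ereal (r/2 * q x))"
  shows "proximal_hull r f = f"
proof
  fix x
  obtain a c x0 where "0 < a" "a < r" and quadratic_minorant:
    "\<And>y. ereal (c - a/2 * (norm (y - x0))\<^sup>2) \<le> f y"
    using prox_bounded_quadratic_minorant[OF assms(1,3,4)] by blast
  define g where "g x = f x + ereal (r/2 * q x)" for x
  have "lsc_fn g"
    unfolding g_def q_def using lsc by (intro lsc_fn_add_continuous continuous_intros)
  moreover have "proper_fn g"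
    using proper unfolding proper_fn_def g_def by auto
  moreover have "ereal (inner (a *\<^sub>R x0) y + (c - a/2 * (norm x0)\<^sup>2)) \<le> g y" for y
    unfolding g_def using quadratic_minorant \<open>a < r\<close> by (intro affine_minorant_of_quadratic_minorant) auto
  ultimately have affine_approx: "\<exists>w b. (\<forall>z. ereal (inner w z + b) \<le> g z) \<and> \<alpha> \<le> inner w x + b"
    if "ereal \<alpha> < g x" for \<alpha>
    using convex_lsc_affine_minorant_above[of g] convex that unfolding g_def by blast
  show "proximal_hull r f x = f x"
  proof (rule antisym)
    show "proximal_hull r f x \<le> f x"
      by (rule proximal_hull_le)
    show "f x \<le> proximal_hull r f x"
    proof (rule ccontr)
      assume "\<not> f x \<le> proximal_hull r f x"
      then obtain \<alpha> where "proximal_hull r f x < ereal \<alpha>" "ereal \<alpha> < f x"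
        unfolding not_le by (meson ereal_dense2)
      then have "ereal (\<alpha> + r/2 * q x) < g x"
        unfolding g_def by (cases "f x") auto
      then obtain w b where minorant: "\<And>z. ereal (inner w z + b) \<le> f z + ereal (r/2 * q z)"
        and "\<alpha> + r/2 * q x \<le> inner w x + b"
        using affine_approx unfolding g_def by blast
      have "ereal \<alpha> \<le> ereal (inner w x + b - r/2 * q x)"
        using \<open>\<alpha> + r/2 * q x \<le> inner w x + b\<close> by simp
      also have "\<dots> \<le> proximal_hull r f x"
        using \<open>0 < a\<close> \<open>a < r\<close> minorant by (intro affine_minorant_le_proximal_hull) simp_all
      finally have "ereal \<alpha> \<le> proximal_hull r f x" .
      then show False
        using \<open>proximal_hull r f x < ereal \<alpha>\<close> by simp
    qed
  qed
qed

section \<open>The proximal average\<close>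

lemma PA_axis:
  assumes "\<delta> (axis i 1) = 0"
  shows "PA r \<delta> f x (axis i 1) = proximal_hull r (f i) x"
proof -
  have "ereal (axis i 1 $ j) * moreau_env r (f j) z = (if j = i then moreau_env r (f i) z else 0)"
    for j z by (simp add: axis_def one_ereal_def[symmetric] zero_ereal_def[symmetric])
  then have "(\<Sum>j\<in>UNIV. ereal (axis i 1 $ j) * moreau_env r (f j) z) = moreau_env r (f i) z" for z
    by simp
  then show ?thesis
    unfolding PA_def proximal_hull_def assms by simp
qed

lemma PA_eq_SUP:
  assumes "\<And>i y. \<bar>moreau_env r (f i) y\<bar> \<noteq> \<infinity>"
  shows "PA r \<delta> f x lam = (SUP y. ereal ((\<Sum>i\<in>UNIV. lam $ i * real_of_ereal (moreau_env r (f i) y))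
            - (r + \<delta> lam)/2 * (norm (y - x))\<^sup>2))"
proof -
  have "(\<Sum>i\<in>UNIV. ereal (lam $ i) * moreau_env r (f i) y)
      = ereal (\<Sum>i\<in>UNIV. lam $ i * real_of_ereal (moreau_env r (f i) y))" for y
    using assms by (simp add: ereal_real' flip: sum_ereal times_ereal.simps(1))
  then show ?thesis
    unfolding PA_def uminus_moreau_env_uminus by simp
qed

locale prox_bounded_family =
  fixes f :: "'m::finite \<Rightarrow> 'a::euclidean_space \<Rightarrow> ereal" and r :: real
  assumes proper: "\<And>i. proper_fn (f i)"
    and prox_bounded: "\<And>i. prox_bounded (f i)"
    and threshold_less: "\<And>i. prox_threshold (f i) < r"
begin

definition env :: "'m \<Rightarrow> 'a \<Rightarrow> real" where
  "env i y = real_of_ereal (moreau_env r (f i) y)"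

lemma r_pos: "0 < r"
  using prox_threshold_nonneg[OF prox_bounded] threshold_less by (rule le_less_trans)

lemma moreau_env_eq_env: "moreau_env r (f i) y = ereal (env i y)"
  unfolding env_def using moreau_env_finite[OF proper prox_bounded threshold_less]
  by (simp add: ereal_real')

lemma PA_eq: "PA r \<delta> f x lam
    = (SUP y. ereal ((\<Sum>i\<in>UNIV. lam $ i * env i y) - (r + \<delta> lam)/2 * (norm (y - x))\<^sup>2))"
  unfolding env_def by (rule PA_eq_SUP) (rule moreau_env_finite[OF proper prox_bounded threshold_less])

lemma PA_ge: "ereal (\<Sum>i\<in>UNIV. lam $ i * env i x) \<le> PA r \<delta> f x lam"
  unfolding PA_eq by (rule SUP_upper2[of x]) auto

lemma PA_finite:
  assumes "lam \<in> Lambda_simplex" "0 < \<delta> lam"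
  shows "\<bar>PA r \<delta> f x lam\<bar> \<noteq> \<infinity>"
proof -
  obtain z where dom: "\<And>i. f i (z i) < \<infinity>"
    using proper unfolding proper_fn_def by metis
  define F where "F i = real_of_ereal (f i (z i))" for i
  have "f i (z i) = ereal (F i)" for i
    using dom[of i] proper[of i] unfolding F_def proper_fn_def by (cases "f i (z i)") auto
  then have "env i y \<le> F i + r/2 * (norm (y - z i))\<^sup>2" for i y
    using moreau_env_le[of r "f i" y "z i"] by (simp add: moreau_env_eq_env norm_minus_commute)
  then have "PA r \<delta> f x lam
      \<le> ereal (\<Sum>i\<in>UNIV. lam $ i * (F i + r * (r + \<delta> lam) / (2 * (r + \<delta> lam - r)) * (norm (x - z i))\<^sup>2))"
    unfolding PA_eq using assms r_pos by (intro SUP_convex_combination_minus_quadratic_le) auto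
  with PA_ge[of lam x \<delta>] show ?thesis
    by auto
qed

lemma proper_PA:
  assumes "lam \<in> Lambda_simplex" and \<delta>_axis: "\<And>i. \<delta> (axis i 1) = 0"
    and \<delta>_pos: "(\<forall>i. lam \<noteq> axis i 1) \<Longrightarrow> 0 < \<delta> lam"
  shows "proper_fn (\<lambda>x. PA r \<delta> f x lam)"
  unfolding proper_fn_def
proof
  have "PA r \<delta> f x lam \<noteq> -\<infinity>" for x
    using PA_ge[of lam x \<delta>] by auto
  then show "\<forall>x. PA r \<delta> f x lam \<noteq> -\<infinity>" ..
  show "\<exists>x. PA r \<delta> f x lam < \<infinity>"
  proof (cases "\<exists>i. lam = axis i 1")
    case True
    then obtain i where "lam = axis i 1" ..
    obtain z where "f i z < \<infinity>"
      using proper unfolding proper_fn_def by blast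
    then have "PA r \<delta> f z lam < \<infinity>"
      unfolding \<open>lam = axis i 1\<close> PA_axis[where \<delta>=\<delta>, OF \<delta>_axis]
      using proximal_hull_le by (rule le_less_trans[rotated])
    then show ?thesis ..
  next
    case False
    then have "\<bar>PA r \<delta> f 0 lam\<bar> \<noteq> \<infinity>"
      using assms(1) \<delta>_pos by (intro PA_finite) auto
    then have "PA r \<delta> f 0 lam < \<infinity>"
      by (cases "PA r \<delta> f 0 lam") auto
    then show ?thesis ..
  qed
qed

lemma lower_C2_PA:
  assumes "lam \<in> Lambda_simplex" "0 < \<delta> lam"
  shows "lower_C2 (\<lambda>x. PA r \<delta> f x lam)"
proof -
  have finite: "\<bar>PA r \<delta> f x lam\<bar> \<noteq> \<infinity>" for x
    using assms by (rule PA_finite)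
  have "(SUP y. ereal ((\<Sum>i\<in>UNIV. lam $ i * env i y) - (r + \<delta> lam)/2 * (norm (y - x))\<^sup>2))
      = ereal (real_of_ereal (PA r \<delta> f x lam))" for x
    unfolding PA_eq[symmetric] using finite[of x] by (simp add: ereal_real')
  then have "convex_on UNIV (\<lambda>x. real_of_ereal (PA r \<delta> f x lam) + (r + \<delta> lam)/2 * q x)"
    by (rule convex_on_SUP_minus_quadratic)
  then show ?thesis
    unfolding lower_C2_def using finite by blast
qed

end

theorem mainTheorem1:
  fixes f :: "'m::finite \<Rightarrow> 'a::euclidean_space \<Rightarrow> ereal"
    and \<delta> :: "real ^ 'm \<Rightarrow> real"
    and r :: real
  assumes proper: "\<And>i. proper_fn (f i)"
    and lsc: "\<And>i. lsc_fn (f i)"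
    and pb: "\<And>i. prox_bounded (f i)"
    and r_gt: "\<And>i. r > prox_threshold (f i)"
    and \<delta>_cont: "continuous_on Lambda_simplex \<delta>"
    and \<delta>_vert: "\<And>i. \<delta> (axis i 1) = 0"
    and \<delta>_pos: "\<And>lam. lam \<in> Lambda_simplex \<Longrightarrow> (\<forall>i. lam \<noteq> axis i 1) \<Longrightarrow> \<delta> lam > 0"
  shows "(\<forall>lam\<in>Lambda_simplex. proper_fn (\<lambda>x. PA r \<delta> f x lam))
       \<and> (\<forall>lam\<in>Lambda_simplex. (\<forall>i. lam $ i \<noteq> 1) \<longrightarrow> lower_C2 (\<lambda>x. PA r \<delta> f x lam))
       \<and> (\<forall>i. ext_convex (\<lambda>x. f i x + ereal (r / 2 * q x)) \<longrightarrow> (\<lambda>x. PA r \<delta> f x (axis i 1)) = f i)"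
proof -
  interpret prox_bounded_family f r
    using proper pb r_gt by unfold_locales
  have "proper_fn (\<lambda>x. PA r \<delta> f x lam)" if "lam \<in> Lambda_simplex" for lam
    using that \<delta>_vert \<delta>_pos[OF that] by (rule proper_PA)
  moreover have "lower_C2 (\<lambda>x. PA r \<delta> f x lam)"
    if "lam \<in> Lambda_simplex" "\<forall>i. lam $ i \<noteq> 1" for lam
  proof -
    have "0 < \<delta> lam"
      using \<delta>_pos that by (metis axis_nth)
    with that(1) show ?thesis
      by (rule lower_C2_PA)
  qed
  moreover have "(\<lambda>x. PA r \<delta> f x (axis i 1)) = f i"
    if "ext_convex (\<lambda>x. f i x + ereal (r / 2 * q x))" for i
    using proximal_hull_eq_self[OF proper lsc pb r_gt] that
    unfolding PA_axis[where \<delta>=\<delta>, OF \<delta>_vert] by simp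
  ultimately show ?thesis
    by blast
qed

end
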